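(* Consider the compound Burgers-Korteweg-de Vries equation $$u_t + \alpha u u_x + \beta u^2 u_x + \mu u_{xx} + s u_{xxx} = 0,$$ with real constants $\alpha>0$, $\mu>0$, $s>0$ and $\beta<0$ (so $-s\beta>0$). Let $\varepsilon_1,\varepsilon_2,\varepsilon_3,\varepsilon\in\{1,-1\}$ satisfy the constraint $\varepsilon_1\varepsilon_2\varepsilon_3=1$, and set $$\kappa=\varepsilon_1\,\frac{\alpha}{2|\beta|}\sqrt{\frac{|\beta|}{6s}}-\varepsilon_2\,\frac{\mu}{6s}.$$ Define $$B_0=-\frac{\alpha}{2\beta}-\varepsilon_3\sqrt{\frac{6s}{|\beta|}}\,\frac{\mu}{6s},\qquad B_1=\varepsilon_3\sqrt{\frac{6s}{|\beta|}}\,\kappa,\qquad C_1=2\kappa,$$ $$D_1=i\,\varepsilon\left(\frac{\alpha}{2|\beta|}-\varepsilon_3\,\frac{\mu}{6s}\sqrt{\frac{6s}{|\beta|}}\right),\qquad v=-\frac{\mu^2}{6s}-2s\left[\frac{\alpha}{2|\beta|}\sqrt{\frac{|\beta|}{6s}}-\varepsilon_3\frac{\mu}{6s}\right]^2-\frac{\alpha^2}{4\beta}.$$ Then, for arbitrary $x_0$, $$u(x,t)=B_0+B_1\tanh\big[C_1(x-vt+x_0)\big]+D_1\,\mathrm{sech}\big[C_1(x-vt+x_0)\big]$$ is a (complex) traveling solitary wave solution of the equation, whose real part has a kink profile and whose imaginary part has a bell profile; moreover $B_1^2=-D_1^2$, so that $|B_1|=|D_1|$ (with $D_1$ purely ima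ginary).
   Context: Traveling waves $u(x,t)=u(\xi)$, $\xi=x-vt$, of the equation satisfy (after one integration with zero integration constant) $u''+ru'+au^3+bu^2+cu=0$ with $r=\mu/s$, $a=\beta/(3s)$, $b=\alpha/(2s)$, $c=-v/s$. The solution is sought via the hyperbolic ansatz $u=B_0+B_1\tanh[C_1(x-vt+x_0)]+D_1\,\mathrm{sech}[C_1(x-vt+x_0)]$, whose constants are obtained by substituting into the ODE, writing everything in exponentials $e^{kC_1\xi}$, and equating the coefficients of $e^{kC_1\xi}$, $k=0,\dots,6$, to zero (the only other solutions of that algebraic system have $B_1=D_1=0$, i.e. constant solutions). *)

theory Defs
  imports "HOL-Analysis.Analysis"
begin

definition sech :: "real \<Rightarrow> real" where
  "sech z = 1 / cosh z"

definition cBKdV_solution ::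
  "real \<Rightarrow> real \<Rightarrow> real \<Rightarrow> real \<Rightarrow> (real \<Rightarrow> real \<Rightarrow> complex) \<Rightarrow> bool" where
  "cBKdV_solution \<alpha> \<beta> \<mu> s u \<longleftrightarrow>
     (\<exists>ux uxx uxxx ut :: real \<Rightarrow> real \<Rightarrow> complex.
        \<forall>x t.
          ((\<lambda>y. u y t) has_vector_derivative ux x t) (at x) \<and>
          ((\<lambda>y. ux y t) has_vector_derivative uxx x t) (at x) \<and>
          ((\<lambda>y. uxx y t) has_vector_derivative uxxx x t) (at x) \<and>
          ((\<lambda>\<tau>. u x \<tau>) has_vector_derivative ut x t) (at t) \<and>
          ut x t + of_real \<alpha> * u x t * ux x t + of_real \<beta> * (u x t)\<^sup>2 * ux x t
            + of_real \<mu> * uxx x t + of_real s * uxxx x t = 0)"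

end

theory Submission
  imports Defs
begin

(* Put \<Psi> = \<sigma> tanh z + i \<epsilon> sech z with \<sigma>\<^sup>2 = \<epsilon>\<^sup>2 = 1. Since tanh\<^sup>2 + sech\<^sup>2 = 1, \<Psi> solves the
   Riccati equation \<Psi>' = (\<sigma>/2)(1 - \<Psi>\<^sup>2), so every derivative of the travelling wave
   u = w (1 + \<Psi>) is a polynomial in \<Psi>. Substituting into the equation leaves
   w k (1 - \<Psi>\<^sup>2) times a quadratic in \<Psi>, where k = C1 \<sigma> / 2 is the rate in x; the given
   parameters are exactly those making its three coefficients vanish (B0 = w, B1 = \<sigma> w,
   D1 = i \<epsilon> w with \<sigma> = \<epsilon>1 \<epsilon>3). *)

lemma tanh_sq_add_sech_sq: "(tanh z)\<^sup>2 + (sech z)\<^sup>2 = (1::real)"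
proof -
  have "(tanh z)\<^sup>2 + (sech z)\<^sup>2 = ((sinh z)\<^sup>2 + 1) / (cosh z)\<^sup>2"
    by (simp add: tanh_def sech_def power_divide add_divide_distrib)
  also have "\<dots> = 1"
    using cosh_real_pos[of z] by (simp flip: cosh_square_eq)
  finally show ?thesis .
qed

lemma has_vector_derivative_tanh_sech:
  fixes \<sigma> \<epsilon> :: real
  assumes "\<sigma>\<^sup>2 = 1" "\<epsilon>\<^sup>2 = 1"
  defines "\<Phi> \<equiv> \<lambda>z. of_real (\<sigma> * tanh z) + \<i> * of_real (\<epsilon> * sech z)"
  shows "(\<Phi> has_vector_derivative of_real (\<sigma> / 2) * (1 - (\<Phi> z)\<^sup>2)) (at z)"
proof -
  have "((\<lambda>z. \<sigma> * tanh z) has_real_derivative \<sigma> * (1 - (tanh z)\<^sup>2)) (at z)"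
    by (auto intro!: derivative_eq_intros)
  moreover have "((\<lambda>z. \<epsilon> * sech z) has_real_derivative - \<epsilon> * tanh z * sech z) (at z)"
    unfolding sech_def
    by (auto intro!: derivative_eq_intros simp: tanh_def power2_eq_square field_simps)
  ultimately have \<Phi>': "(\<Phi> has_vector_derivative
      of_real (\<sigma> * (1 - (tanh z)\<^sup>2)) + \<i> * of_real (- \<epsilon> * tanh z * sech z)) (at z)"
    unfolding \<Phi>_def
    by (intro has_vector_derivative_add has_vector_derivative_mult_right has_vector_derivative_of_real)
  have riccati: "of_real (\<sigma> * (1 - (tanh z)\<^sup>2)) + \<i> * of_real (- \<epsilon> * tanh z * sech z)
      = of_real (\<sigma> / 2) * (1 - (\<Phi> z)\<^sup>2)"
    using assms(1,2) tanh_sq_add_sech_sq[of z]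
    by (simp add: \<Phi>_def complex_eq_iff power2_eq_square algebra_simps) algebra
  show ?thesis using \<Phi>' unfolding riccati .
qed

lemma has_vector_derivative_riccati_affine:
  fixes \<Phi> :: "real \<Rightarrow> complex"
  assumes "\<And>z. (\<Phi> has_vector_derivative of_real k * (1 - (\<Phi> z)\<^sup>2)) (at z)"
  shows "((\<lambda>y. \<Phi> (c * y + d)) has_vector_derivative of_real (c * k) * (1 - (\<Phi> (c * y + d))\<^sup>2)) (at y)"
proof -
  have "((\<lambda>y. c * y + d) has_vector_derivative c) (at y)"
    by (auto intro!: derivative_eq_intros simp flip: has_real_derivative_iff_has_vector_derivative)
  from vector_diff_chain_at[OF this assms]
  show ?thesis by (simp add: o_def scaleR_conv_of_real mult.assoc)
qed

lemma has_vector_derivative_field_compose: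
  fixes h :: "real \<Rightarrow> complex"
  assumes "(h has_vector_derivative D) (at y)" "(P has_field_derivative P') (at (h y))"
  shows "((\<lambda>y. P (h y)) has_vector_derivative D * P') (at y)"
  using field_vector_diff_chain_at[OF assms] by (simp add: o_def)

lemma cBKdV_solution_riccati:
  fixes \<Psi> :: "real \<Rightarrow> real \<Rightarrow> complex" and \<alpha> \<beta> \<mu> s v w k :: real
  assumes \<Psi>_x: "\<And>x t. ((\<lambda>y. \<Psi> y t) has_vector_derivative of_real k * (1 - (\<Psi> x t)\<^sup>2)) (at x)"
    and \<Psi>_t: "\<And>x t. ((\<lambda>\<tau>. \<Psi> x \<tau>) has_vector_derivative of_real (- v * k) * (1 - (\<Psi> x t)\<^sup>2)) (at t)"
    and c0: "\<alpha> * w + \<beta> * w\<^sup>2 - 2 * s * k\<^sup>2 = v"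
    and c1: "\<alpha> * w + 2 * \<beta> * w\<^sup>2 = 2 * \<mu> * k"
    and c2: "\<beta> * w\<^sup>2 + 6 * s * k\<^sup>2 = 0"
  shows "cBKdV_solution \<alpha> \<beta> \<mu> s (\<lambda>x t. of_real w * (1 + \<Psi> x t))"
proof -
  define W K where "W = complex_of_real w" and "K = complex_of_real k"
  define ux where "ux x t = W * K * (1 - (\<Psi> x t)\<^sup>2)" for x t
  define uxx where "uxx x t = -2 * W * K^2 * \<Psi> x t * (1 - (\<Psi> x t)\<^sup>2)" for x t
  define uxxx where "uxxx x t = -2 * W * K^3 * (1 - (\<Psi> x t)\<^sup>2) * (1 - 3 * (\<Psi> x t)\<^sup>2)" for x t
  define ut where "ut x t = - of_real v * W * K * (1 - (\<Psi> x t)\<^sup>2)" for x t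
  have C0: "of_real \<alpha> * W + of_real \<beta> * W\<^sup>2 - 2 * of_real s * K\<^sup>2 = of_real v"
    using arg_cong[OF c0, of complex_of_real] by (simp add: W_def K_def)
  have C1: "of_real \<alpha> * W + 2 * of_real \<beta> * W\<^sup>2 = 2 * of_real \<mu> * K"
    using arg_cong[OF c1, of complex_of_real] by (simp add: W_def K_def)
  have C2: "of_real \<beta> * W\<^sup>2 + 6 * of_real s * K\<^sup>2 = 0"
    using arg_cong[OF c2, of complex_of_real] by (simp add: W_def K_def)
  show ?thesis
    unfolding cBKdV_solution_def W_def[symmetric]
  proof (intro exI allI conjI)
    fix x t
    show "((\<lambda>y. W * (1 + \<Psi> y t)) has_vector_derivative ux x t) (at x)"
      unfolding ux_def
      by (rule has_vector_derivative_field_compose[OF \<Psi>_x, where P = "\<lambda>z. W * (1 + z)", THEN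
            has_vector_derivative_eq_rhs]) (auto intro!: derivative_eq_intros simp: K_def)
    show "((\<lambda>y. ux y t) has_vector_derivative uxx x t) (at x)"
      unfolding ux_def uxx_def
      by (rule has_vector_derivative_field_compose[OF \<Psi>_x, where P = "\<lambda>z. W * K * (1 - z\<^sup>2)", THEN
            has_vector_derivative_eq_rhs])
        (auto intro!: derivative_eq_intros simp: K_def power2_eq_square algebra_simps)
    show "((\<lambda>y. uxx y t) has_vector_derivative uxxx x t) (at x)"
      unfolding uxx_def uxxx_def
      by (rule has_vector_derivative_field_compose[OF \<Psi>_x, where P = "\<lambda>z. -2 * W * K^2 * z * (1 - z\<^sup>2)", THEN
            has_vector_derivative_eq_rhs])
        (auto intro!: derivative_eq_intros simp: K_def power2_eq_square power3_eq_cube algebra_simps)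
    show "((\<lambda>\<tau>. W * (1 + \<Psi> x \<tau>)) has_vector_derivative ut x t) (at t)"
      unfolding ut_def
      by (rule has_vector_derivative_field_compose[OF \<Psi>_t, where P = "\<lambda>z. W * (1 + z)", THEN
            has_vector_derivative_eq_rhs]) (auto intro!: derivative_eq_intros simp: K_def)
    show "ut x t + of_real \<alpha> * (W * (1 + \<Psi> x t)) * ux x t + of_real \<beta> * (W * (1 + \<Psi> x t))\<^sup>2 * ux x t
        + of_real \<mu> * uxx x t + of_real s * uxxx x t = 0"
    proof -
      let ?Y = "\<Psi> x t"
      have "ut x t + of_real \<alpha> * (W * (1 + ?Y)) * ux x t + of_real \<beta> * (W * (1 + ?Y))\<^sup>2 * ux x t
          + of_real \<mu> * uxx x t + of_real s * uxxx x t
        = W * K * (1 - ?Y\<^sup>2) * ((of_real \<alpha> * W + of_real \<beta> * W\<^sup>2 - 2 * of_real s * K\<^sup>2 - of_real v)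
            + (of_real \<alpha> * W + 2 * of_real \<beta> * W\<^sup>2 - 2 * of_real \<mu> * K) * ?Y
            + (of_real \<beta> * W\<^sup>2 + 6 * of_real s * K\<^sup>2) * ?Y\<^sup>2)"
        unfolding ut_def ux_def uxx_def uxxx_def by algebra
      also have "\<dots> = 0" using C0 C1 C2 by simp
      finally show ?thesis .
    qed
  qed
qed

lemma cBKdV_solution_tanh_sech_wave:
  fixes \<alpha> \<beta> \<mu> s v w k C x0 \<sigma> \<epsilon> :: real
  assumes "\<sigma>\<^sup>2 = 1" "\<epsilon>\<^sup>2 = 1" and k: "C * \<sigma> = 2 * k"
    and "\<alpha> * w + \<beta> * w\<^sup>2 - 2 * s * k\<^sup>2 = v"
    and "\<alpha> * w + 2 * \<beta> * w\<^sup>2 = 2 * \<mu> * k"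
    and "\<beta> * w\<^sup>2 + 6 * s * k\<^sup>2 = 0"
  defines "\<Phi> \<equiv> \<lambda>z. of_real (\<sigma> * tanh z) + \<i> * of_real (\<epsilon> * sech z)"
  shows "cBKdV_solution \<alpha> \<beta> \<mu> s (\<lambda>x t. of_real w * (1 + \<Phi> (C * (x - v * t + x0))))"
proof -
  have \<Phi>': "(\<Phi> has_vector_derivative of_real (\<sigma> / 2) * (1 - (\<Phi> z)\<^sup>2)) (at z)" for z
    unfolding \<Phi>_def by (rule has_vector_derivative_tanh_sech[OF assms(1,2)])
  have rate: "C * (\<sigma> / 2) = k" "- v * C * (\<sigma> / 2) = - v * k"
    using k by simp_all
  have "((\<lambda>y. \<Phi> (C * (y - v * t + x0))) has_vector_derivative
      of_real k * (1 - (\<Phi> (C * (x - v * t + x0)))\<^sup>2)) (at x)" for x t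
    using has_vector_derivative_riccati_affine[OF \<Phi>', of C "C * (x0 - v * t)" x, unfolded rate]
    by (simp add: algebra_simps)
  moreover have "((\<lambda>\<tau>. \<Phi> (C * (x - v * \<tau> + x0))) has_vector_derivative
      of_real (- v * k) * (1 - (\<Phi> (C * (x - v * t + x0)))\<^sup>2)) (at t)" for x t
    using has_vector_derivative_riccati_affine[OF \<Phi>', of "- v * C" "C * (x + x0)" t, unfolded rate]
    by (simp add: algebra_simps)
  ultimately show ?thesis
    using assms(4-6) by (rule cBKdV_solution_riccati)
qed

lemma kink_bell_coefficients:
  fixes \<alpha> \<beta> \<mu> s \<epsilon>3 q w k :: real
  assumes "\<beta> < 0" "s > 0" "\<epsilon>3 \<in> {1, -1}"
    and q: "q = sqrt (6 * s / \<bar>\<beta>\<bar>)"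
    and w: "w = \<alpha> / (2 * \<bar>\<beta>\<bar>) - \<epsilon>3 * (\<mu> / (6 * s)) * q"
    and k: "k = \<epsilon>3 * w / q"
  shows "\<beta> * w\<^sup>2 + 6 * s * k\<^sup>2 = 0"
    and "\<alpha> * w + 2 * \<beta> * w\<^sup>2 = 2 * \<mu> * k"
    and "\<alpha> * w + \<beta> * w\<^sup>2 - 2 * s * k\<^sup>2 = - \<mu>\<^sup>2 / (6 * s)
           - 2 * s * (\<alpha> / (2 * \<bar>\<beta>\<bar>) * sqrt (\<bar>\<beta>\<bar> / (6 * s)) - \<epsilon>3 * (\<mu> / (6 * s)))\<^sup>2
           - \<alpha>\<^sup>2 / (4 * \<beta>)"
proof -
  define a m where "a = \<alpha> / (2 * \<bar>\<beta>\<bar>)" and "m = \<mu> / (6 * s)"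
  have "q > 0" using assms(1,2) q by (simp add: divide_pos_neg)
  have \<epsilon>3: "\<epsilon>3\<^sup>2 = 1" using assms(3) by auto
  have "q\<^sup>2 = 6 * s / \<bar>\<beta>\<bar>"
    using assms(2) q by simp
  then have \<beta>: "\<beta> = - 6 * s / q\<^sup>2"
    using assms(1,2) \<open>q > 0\<close> by (simp add: field_simps)
  have \<alpha>: "\<alpha> = 12 * s * a / q\<^sup>2" and \<mu>: "\<mu> = 6 * s * m"
    using assms(1,2) \<beta> by (auto simp: a_def m_def)
  have sqrt_inv: "sqrt (\<bar>\<beta>\<bar> / (6 * s)) = 1 / q"
    using q by (simp add: real_sqrt_divide)
  have w': "w = a - \<epsilon>3 * m * q" using w by (simp add: a_def m_def)
  show "\<beta> * w\<^sup>2 + 6 * s * k\<^sup>2 = 0"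
    using \<open>q > 0\<close> \<epsilon>3 unfolding \<beta> k by (simp add: field_simps)
  show "\<alpha> * w + 2 * \<beta> * w\<^sup>2 = 2 * \<mu> * k"
    using \<open>q > 0\<close> \<epsilon>3 unfolding \<alpha> \<beta> \<mu> k w' by (simp add: field_simps power2_eq_square)
  show "\<alpha> * w + \<beta> * w\<^sup>2 - 2 * s * k\<^sup>2 = - \<mu>\<^sup>2 / (6 * s)
           - 2 * s * (\<alpha> / (2 * \<bar>\<beta>\<bar>) * sqrt (\<bar>\<beta>\<bar> / (6 * s)) - \<epsilon>3 * (\<mu> / (6 * s)))\<^sup>2
           - \<alpha>\<^sup>2 / (4 * \<beta>)"
    using \<open>q > 0\<close> \<epsilon>3 assms(2) unfolding sqrt_inv a_def[symmetric] m_def[symmetric]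
    unfolding \<alpha> \<beta> \<mu> k w' by (simp add: field_simps power2_eq_square) algebra
qed

theorem mainTheorem1:
  fixes \<alpha> \<beta> \<mu> s \<epsilon>1 \<epsilon>2 \<epsilon>3 \<epsilon> x0 \<kappa> B0 B1 C1 v :: real
    and D1 :: complex and u :: "real \<Rightarrow> real \<Rightarrow> complex"
  assumes "\<alpha> > 0" and "\<mu> > 0" and "s > 0" and "\<beta> < 0"
    and "\<epsilon>1 \<in> {1, -1}" and "\<epsilon>2 \<in> {1, -1}" and "\<epsilon>3 \<in> {1, -1}" and "\<epsilon> \<in> {1, -1}"
    and "\<epsilon>1 * \<epsilon>2 * \<epsilon>3 = 1"
  defines "\<kappa> \<equiv> \<epsilon>1 * (\<alpha> / (2 * \<bar>\<beta>\<bar>)) * sqrt (\<bar>\<beta>\<bar> / (6 * s)) - \<epsilon>2 * (\<mu> / (6 * s))"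
    and "B0 \<equiv> - \<alpha> / (2 * \<beta>) - \<epsilon>3 * sqrt (6 * s / \<bar>\<beta>\<bar>) * (\<mu> / (6 * s))"
    and "B1 \<equiv> \<epsilon>3 * sqrt (6 * s / \<bar>\<beta>\<bar>) * \<kappa>"
    and "C1 \<equiv> 2 * \<kappa>"
    and "D1 \<equiv> \<i> * of_real (\<epsilon> * (\<alpha> / (2 * \<bar>\<beta>\<bar>) - \<epsilon>3 * (\<mu> / (6 * s)) * sqrt (6 * s / \<bar>\<beta>\<bar>)))"
    and "v \<equiv> - \<mu>\<^sup>2 / (6 * s)
             - 2 * s * (\<alpha> / (2 * \<bar>\<beta>\<bar>) * sqrt (\<bar>\<beta>\<bar> / (6 * s)) - \<epsilon>3 * (\<mu> / (6 * s)))\<^sup>2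
             - \<alpha>\<^sup>2 / (4 * \<beta>)"
    and "u \<equiv> (\<lambda>x t. of_real B0 + of_real B1 * of_real (tanh (C1 * (x - v * t + x0)))
                      + D1 * of_real (sech (C1 * (x - v * t + x0))))"
  shows "cBKdV_solution \<alpha> \<beta> \<mu> s u
    \<and> (\<forall>x t. Re (u x t) = B0 + B1 * tanh (C1 * (x - v * t + x0)))
    \<and> (\<forall>x t. Im (u x t) = Im D1 * sech (C1 * (x - v * t + x0)))
    \<and> Re D1 = 0
    \<and> (complex_of_real B1)\<^sup>2 = - D1\<^sup>2
    \<and> \<bar>B1\<bar> = cmod D1"
proof -
  define q where "q = sqrt (6 * s / \<bar>\<beta>\<bar>)"
  define w where "w = \<alpha> / (2 * \<bar>\<beta>\<bar>) - \<epsilon>3 * (\<mu> / (6 * s)) * q"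
  define k where "k = \<epsilon>3 * w / q"
  define \<sigma> where "\<sigma> = \<epsilon>1 * \<epsilon>3"
  have "q > 0" using assms(3,4) by (simp add: q_def divide_pos_neg)
  have signs: "\<epsilon>1\<^sup>2 = 1" "\<epsilon>3\<^sup>2 = 1" "\<epsilon>\<^sup>2 = 1" "\<sigma>\<^sup>2 = 1" "\<epsilon>2 = \<sigma>"
    using assms(5-9) by (auto simp: \<sigma>_def)
  have sqrt_inv: "sqrt (\<bar>\<beta>\<bar> / (6 * s)) = 1 / q"
    by (simp add: q_def real_sqrt_divide)
  have \<kappa>: "\<kappa> = \<epsilon>1 * w / q"
    using \<open>q > 0\<close> signs unfolding \<kappa>_def w_def sqrt_inv
    by (simp add: field_simps \<sigma>_def power2_eq_square)
  have B0: "B0 = w"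
    using assms(4) unfolding B0_def w_def q_def[symmetric] by (simp add: algebra_simps)
  have B1: "B1 = \<sigma> * w"
    using \<open>q > 0\<close> unfolding B1_def \<kappa> q_def[symmetric] by (simp add: \<sigma>_def)
  have D1: "D1 = \<i> * of_real (\<epsilon> * w)"
    unfolding D1_def w_def q_def[symmetric] by (simp add: algebra_simps)
  have C1: "C1 * \<sigma> = 2 * k"
    using signs(1) unfolding C1_def \<kappa> k_def \<sigma>_def by (simp add: power2_eq_square algebra_simps)
  have "cBKdV_solution \<alpha> \<beta> \<mu> s u"
  proof -
    have "u = (\<lambda>x t. of_real w * (1 + (of_real (\<sigma> * tanh (C1 * (x - v * t + x0)))
        + \<i> * of_real (\<epsilon> * sech (C1 * (x - v * t + x0))))))"
      by (auto simp: u_def B0 B1 D1 algebra_simps)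
    with kink_bell_coefficients[OF assms(4,3,7) q_def w_def k_def]
    show ?thesis
      using cBKdV_solution_tanh_sech_wave[OF signs(4,3) C1] by (simp add: v_def)
  qed
  moreover have "(complex_of_real B1)\<^sup>2 = - D1\<^sup>2"
    using signs by (simp add: B1 D1 power_mult_distrib flip: of_real_power)
  moreover have "\<bar>B1\<bar> = cmod D1"
    using signs by (simp add: B1 D1 abs_mult norm_mult abs_square_eq_1 flip: power_mult_distrib)
  ultimately show ?thesis by (simp add: u_def D1)
qed

end
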